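(* For $0<p<1$ and $0<\varepsilon<1$, $$\frac{1}{1+\frac{1}{p\log(1/\varepsilon)}}\le\min\Big\{1-\varepsilon,\;p\log\frac1\varepsilon\Big\}\le\frac{2}{1+\frac{1}{p\log(1/\varepsilon)}}.$$
   Context: $\log$ is the natural logarithm. *)

theory Defs
  imports Complex_Main
begin

end

theory Submission
  imports Defs
begin

text \<open>Write \<open>x = p ln(1/\<epsilon>)\<close>, so both bounds read \<open>x/(1+x)\<close> and \<open>2x/(1+x)\<close>.
  The lower bound against \<open>1 - \<epsilon>\<close> is \<open>\<epsilon>(1 + ln(1/\<epsilon>)) \<le> 1\<close>, i.e. \<open>ln y \<le> y - 1\<close> at
  \<open>y = 1/\<epsilon>\<close>, together with \<open>x < ln(1/\<epsilon>)\<close>. The upper bound holds for any minimum of \<open>x\<close>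
  with a number at most \<open>1\<close>: compare with \<open>x\<close> when \<open>x \<le> 1\<close> and with \<open>1\<close> otherwise.\<close>

lemma mult_one_plus_ln_inverse_le_one:
  fixes \<epsilon> :: real
  assumes "0 < \<epsilon>"
  shows "\<epsilon> * (1 + ln (1 / \<epsilon>)) \<le> 1"
proof -
  have "ln (1 / \<epsilon>) \<le> 1 / \<epsilon> - 1"
    using ln_le_minus_one[of "1 / \<epsilon>"] assms by simp
  then show ?thesis
    using assms by (simp add: field_simps)
qed

lemma divide_one_plus_le_one_minus:
  fixes x \<epsilon> :: real
  assumes "0 < \<epsilon>" "0 \<le> x" "x \<le> ln (1 / \<epsilon>)"
  shows "x / (1 + x) \<le> 1 - \<epsilon>"
proof -
  have "\<epsilon> * (1 + x) \<le> \<epsilon> * (1 + ln (1 / \<epsilon>))"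
    using assms by simp
  also have "\<dots> \<le> 1"
    using mult_one_plus_ln_inverse_le_one assms(1) .
  finally show ?thesis
    using assms(2) by (simp add: field_simps)
qed

lemma min_le_twice_divide_one_plus:
  fixes a x :: real
  assumes "a \<le> 1" "0 \<le> x"
  shows "min a x \<le> 2 * x / (1 + x)"
proof (cases "x \<le> 1")
  case True
  then have "x \<le> 2 * x / (1 + x)"
    using assms(2) by (simp add: field_simps mult_left_le)
  then show ?thesis by linarith
next
  case False
  then have "1 \<le> 2 * x / (1 + x)"
    by (simp add: field_simps)
  then show ?thesis
    using assms(1) by linarith
qed

theorem lemma2:
  fixes p \<epsilon> :: real
  assumes "0 < p" "p < 1" "0 < \<epsilon>" "\<epsilon> < 1"
  shows "1 / (1 + 1 / (p * ln (1 / \<epsilon>))) \<le> min (1 - \<epsilon>) (p * ln (1 / \<epsilon>))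
     \<and> min (1 - \<epsilon>) (p * ln (1 / \<epsilon>)) \<le> 2 / (1 + 1 / (p * ln (1 / \<epsilon>)))"
proof -
  define x where "x = p * ln (1 / \<epsilon>)"
  have "0 < ln (1 / \<epsilon>)"
    using assms by simp
  then have x_pos: "0 < x" and x_le: "x \<le> ln (1 / \<epsilon>)"
    using assms(1,2) by (simp_all add: x_def)
  have "1 / (1 + 1 / x) = x / (1 + x)" and "2 / (1 + 1 / x) = 2 * x / (1 + x)"
    using x_pos by (simp_all add: field_simps)
  moreover have "x / (1 + x) \<le> x"
    using x_pos by (simp add: field_simps)
  moreover have "x / (1 + x) \<le> 1 - \<epsilon>"
    using divide_one_plus_le_one_minus assms(3) x_pos x_le by simp
  moreover have "min (1 - \<epsilon>) x \<le> 2 * x / (1 + x)"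
    using min_le_twice_divide_one_plus assms(3) x_pos by simp
  ultimately show ?thesis
    unfolding x_def by simp
qed

end
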